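(* Assume the stationary generator setting described in the context (for a process $(X_t)$ with memory $(R_t)$), and let $k\ge1$. Then $$H(R_k,X_{1:k})-H(R_0,X_{1:k})=I(R_0;X_{1:k})-I(R_k;X_{1:k})=\zeta_R(k)-I\big(\overleftarrow X;R_0\,\big|\,\overrightarrow X,R_k\big).$$
   Context: Stationary generator setting: $\mathcal X$ and $\mathcal R$ finite sets; $(X_t,R_t)_{t\in\mathbb Z}$ jointly stationary with $X_t\in\mathcal X$, $R_t\in\mathcal R$ (memory after $X_t$). Generator condition: for every $t$, $\big((X_s)_{s\le t},(R_s)_{s<t}\big)$ is conditionally independent of $\big((X_s)_{s>t},(R_s)_{s>t}\big)$ given $R_t$. Notation: $X_{a:b}=(X_a,\dots,X_b)$, $\overleftarrow X=(\dots,X_{-1},X_0)$, $\overrightarrow X=(X_1,X_2,\dots)$; information quantities with infinite sequences are limits of finite windows. Oracular information: $\zeta_R(k):=I(X_{1:k};R_0\mid\overleftarrow X)$. *)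

theory Defs
  imports "HOL-Probability.Probability"
begin

definition Ent :: "'w measure \<Rightarrow> real \<Rightarrow> ('w \<Rightarrow> 'a) \<Rightarrow> real" where
  "Ent M b Y = prob_space.entropy M b (count_space (Y ` space M)) Y"

definition MI :: "'w measure \<Rightarrow> real \<Rightarrow> ('w \<Rightarrow> 'a) \<Rightarrow> ('w \<Rightarrow> 'c) \<Rightarrow> real" where
  "MI M b Y Z = prob_space.mutual_information M b
      (count_space (Y ` space M)) (count_space (Z ` space M)) Y Z"

definition CMI :: "'w measure \<Rightarrow> real \<Rightarrow> ('w \<Rightarrow> 'a) \<Rightarrow> ('w \<Rightarrow> 'c) \<Rightarrow> ('w \<Rightarrow> 'd) \<Rightarrow> real" where
  "CMI M b Y Z W = prob_space.conditional_mutual_information M b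
      (count_space (Y ` space M)) (count_space (Z ` space M)) (count_space (W ` space M)) Y Z W"

text \<open>Finite window X_{a:b} = (X_a, ..., X_b) (empty if b < a).\<close>
definition win :: "(int \<Rightarrow> 'w \<Rightarrow> 'x) \<Rightarrow> int \<Rightarrow> int \<Rightarrow> 'w \<Rightarrow> 'x list" where
  "win X a b \<omega> = map (\<lambda>t. X t \<omega>) [a..b]"

definition cond_indep :: "'w measure \<Rightarrow> ('w \<Rightarrow> 'a) \<Rightarrow> ('w \<Rightarrow> 'c) \<Rightarrow> ('w \<Rightarrow> 'd) \<Rightarrow> bool" where
  "cond_indep M A B C \<longleftrightarrow> (\<forall>a b c.
     measure M {\<omega>\<in>space M. A \<omega> = a \<and> B \<omega> = b \<and> C \<omega> = c} * measure M {\<omega>\<in>space M. C \<omega> = c}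
   = measure M {\<omega>\<in>space M. A \<omega> = a \<and> C \<omega> = c} * measure M {\<omega>\<in>space M. B \<omega> = b \<and> C \<omega> = c})"

definition jointly_stationary :: "'w measure \<Rightarrow> (int \<Rightarrow> 'w \<Rightarrow> 'x) \<Rightarrow> (int \<Rightarrow> 'w \<Rightarrow> 'r) \<Rightarrow> bool" where
  "jointly_stationary M X R \<longleftrightarrow> (\<forall>a b s.
     distr M (count_space UNIV) (\<lambda>\<omega>. map (\<lambda>t. (X t \<omega>, R t \<omega>)) [a..b])
   = distr M (count_space UNIV) (\<lambda>\<omega>. map (\<lambda>t. (X (t + s) \<omega>, R (t + s) \<omega>)) [a..b]))"

text \<open>Generator condition: for every t, ((X_s)_{s<=t}, (R_s)_{s<t}) is conditionally
  independent of ((X_s)_{s>t}, (R_s)_{s>t}) given R_t; stated for all finite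
  sub-windows (equivalent to the statement for the infinite families).\<close>
definition generator :: "'w measure \<Rightarrow> (int \<Rightarrow> 'w \<Rightarrow> 'x) \<Rightarrow> (int \<Rightarrow> 'w \<Rightarrow> 'r) \<Rightarrow> bool" where
  "generator M X R \<longleftrightarrow> (\<forall>t. \<forall>n m :: nat.
     cond_indep M
       (\<lambda>\<omega>. (win X (t - int n) t \<omega>, win R (t - int n) (t - 1) \<omega>))
       (\<lambda>\<omega>. (win X (t + 1) (t + int m) \<omega>, win R (t + 1) (t + int m) \<omega>))
       (R t))"

text \<open>Oracular information zeta_R(k) = I(X_{1:k} ; R_0 | past X), the past being the
  limit of finite windows X_{-n+1:0}.\<close>
definition zeta :: "'w measure \<Rightarrow> real \<Rightarrow> (int \<Rightarrow> 'w \<Rightarrow> 'x) \<Rightarrow> (int \<Rightarrow> 'w \<Rightarrow> 'r) \<Rightarrow> nat \<Rightarrow> real" where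
  "zeta M b X R k = lim (\<lambda>n::nat. CMI M b (win X 1 (int k)) (R 0) (win X (1 - int n) 0))"

text \<open>I(past X ; R_0 | future X, R_k), as the joint limit of finite windows
  X_{-n+1:0} (past) and X_{1:m} (future).\<close>
definition past_R0_given_future_Rk ::
  "'w measure \<Rightarrow> real \<Rightarrow> (int \<Rightarrow> 'w \<Rightarrow> 'x) \<Rightarrow> (int \<Rightarrow> 'w \<Rightarrow> 'r) \<Rightarrow> nat \<Rightarrow> real" where
  "past_R0_given_future_Rk M b X R k = Lim (sequentially \<times>\<^sub>F sequentially)
     (\<lambda>(n::nat, m::nat). CMI M b (win X (1 - int n) 0) (R 0)
                            (\<lambda>\<omega>. (win X 1 (int m) \<omega>, R (int k) \<omega>)))"

end

theory Submission
  imports Defs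
begin

text \<open>Write P_n = X_{1-n:0}. For m \<ge> k the generator property at time k makes X_{k+1:m}
  irrelevant once X_{1:k} and R_k are given, and at time 0 it makes P_n independent of
  (X_{1:k}, R_k) given R_0. Together with the chain rule this gives
    I(P_n; R_0 | X_{1:m}, R_k) = I(X_{1:k}; R_0 | P_n) - [I(R_0; X_{1:k}) - I(R_k; X_{1:k})] + e_n - e_{n+k}
  with e_n = I(R_0; P_n), where stationarity (a shift by k) identifies I(P_n, X_{1:k}; R_k) with
  e_{n+k}. As e_n increases and is bounded by H(R_0), the difference e_n - e_{n+k} vanishes in the
  limit, and letting n, m \<rightarrow> \<infinity> gives the second equality; the first one is H(R_0) = H(R_k).
  The information identities themselves are proved by writing entropy as expected surprisal,
  which turns each of them into an almost-everywhere identity between logarithms of the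
  probabilities of the fibres of the variables involved.\<close>

section \<open>Information identities for simple random variables\<close>

definition determines :: "'w measure \<Rightarrow> ('w \<Rightarrow> 'a) \<Rightarrow> ('w \<Rightarrow> 'c) \<Rightarrow> bool" where
  "determines M U V \<longleftrightarrow> (\<forall>\<omega>\<in>space M. \<forall>\<omega>'\<in>space M. U \<omega> = U \<omega>' \<longrightarrow> V \<omega> = V \<omega>')"

lemma vimage_singleton_Int_space: "V -` {x} \<inter> space M = {\<omega> \<in> space M. V \<omega> = x}"
  by auto

lemma determinesD:
  "determines M U V \<Longrightarrow> \<omega> \<in> space M \<Longrightarrow> \<omega>' \<in> space M \<Longrightarrow> U \<omega> = U \<omega>' \<Longrightarrow> V \<omega> = V \<omega>'"
  unfolding determines_def by blast

context information_space
begin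

definition surprisal :: "('a \<Rightarrow> 'c) \<Rightarrow> 'a \<Rightarrow> real" where
  "surprisal V \<omega> = - log b (prob {w \<in> space M. V w = V \<omega>})"

lemma simple_function_surprisal:
  assumes "simple_function M V"
  shows "simple_function M (surprisal V)"
proof -
  have "simple_function M ((\<lambda>y. - log b (prob (V -` {y} \<inter> space M))) \<circ> V)"
    using assms by (rule simple_function_compose)
  then show ?thesis
    by (rule simple_function_cong[THEN iffD1, rotated])
       (simp add: surprisal_def vimage_singleton_Int_space)
qed

lemma integrable_surprisal: "simple_function M V \<Longrightarrow> integrable M (surprisal V)"
  by (intro integrable_simple_function simple_function_surprisal) auto

lemma AE_prob_fiber_pos:
  assumes V: "simple_function M V"
  shows "AE \<omega> in M. 0 < prob {w \<in> space M. V w = V \<omega>}"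
proof -
  let ?N = "{y \<in> V ` space M. prob (V -` {y} \<inter> space M) = 0}"
  have "AE \<omega> in M. \<forall>y\<in>?N. V \<omega> \<noteq> y"
  proof (subst AE_finite_all)
    show "finite ?N" using simple_functionD(1)[OF V] by simp
    show "\<forall>y\<in>?N. AE \<omega> in M. V \<omega> \<noteq> y"
    proof
      fix y assume y: "y \<in> ?N"
      have "V -` {y} \<inter> space M \<in> sets M" using V by (rule simple_functionD(2))
      then show "AE \<omega> in M. V \<omega> \<noteq> y"
        using y by (intro AE_I[of _ _ "V -` {y} \<inter> space M"]) (auto simp: emeasure_eq_measure)
    qed
  qed
  then show ?thesis
    using AE_space
  proof eventually_elim
    case (elim \<omega>)
    then have "prob (V -` {V \<omega>} \<inter> space M) \<noteq> 0" by blast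
    then show ?case by (simp add: less_le vimage_singleton_Int_space)
  qed
qed

lemma expectation_eq_sum_simple:
  assumes V: "simple_function M V"
  shows "expectation (\<lambda>\<omega>. g (V \<omega>)) = (\<Sum>x\<in>V ` space M. prob (V -` {x} \<inter> space M) * g x)"
proof -
  have D: "simple_distributed M V (\<lambda>x. prob (V -` {x} \<inter> space M))"
    by (rule simple_distributedI[OF V measure_nonneg refl])
  have "expectation (\<lambda>\<omega>. g (V \<omega>)) = (\<integral>x. prob (V -` {x} \<inter> space M) * g x \<partial>count_space (V ` space M))"
    by (rule distributed_integral[OF simple_distributed[OF D], symmetric]) auto
  also have "\<dots> = (\<Sum>x\<in>V ` space M. prob (V -` {x} \<inter> space M) * g x)"
    using V by (simp add: lebesgue_integral_count_space_finite simple_functionD)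
  finally show ?thesis .
qed

lemma Ent_eq_expectation_surprisal:
  assumes V: "simple_function M V"
  shows "Ent M b V = expectation (surprisal V)"
proof -
  have D: "simple_distributed M V (\<lambda>x. prob (V -` {x} \<inter> space M))"
    by (rule simple_distributedI[OF V measure_nonneg refl])
  have "Ent M b V = - expectation (\<lambda>\<omega>. log b (prob (V -` {V \<omega>} \<inter> space M)))"
    unfolding Ent_def entropy_simple_distributed[OF D]
    using expectation_eq_sum_simple[OF V, of "\<lambda>x. log b (prob (V -` {x} \<inter> space M))"] by simp
  also have "\<dots> = expectation (surprisal V)"
    by (subst integral_minus[symmetric], rule Bochner_Integration.integral_cong)
       (simp_all add: surprisal_def vimage_singleton_Int_space)
  finally show ?thesis .
qed

lemma Ent_cong:
  assumes "simple_function M V" "simple_function M W" "determines M V W" "determines M W V"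
  shows "Ent M b V = Ent M b W"
proof -
  have "{w \<in> space M. V w = V \<omega>} = {w \<in> space M. W w = W \<omega>}" if "\<omega> \<in> space M" for \<omega>
    using assms(3,4) that unfolding determines_def by blast
  then have "surprisal V \<omega> = surprisal W \<omega>" if "\<omega> \<in> space M" for \<omega>
    using that by (simp add: surprisal_def)
  then show ?thesis
    unfolding Ent_eq_expectation_surprisal[OF assms(1)] Ent_eq_expectation_surprisal[OF assms(2)]
    by (intro Bochner_Integration.integral_cong) simp_all
qed

lemma MI_eq_Ent:
  assumes Y: "simple_function M Y" and Z: "simple_function M Z"
  shows "MI M b Y Z = Ent M b Y + Ent M b Z - Ent M b (\<lambda>\<omega>. (Y \<omega>, Z \<omega>))"
proof -
  note YZ = simple_function_Pair[OF Y Z]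
  let ?Py = "\<lambda>y. prob (Y -` {y} \<inter> space M)"
  let ?Pz = "\<lambda>z. prob (Z -` {z} \<inter> space M)"
  let ?Pyz = "\<lambda>t. prob ((\<lambda>\<omega>. (Y \<omega>, Z \<omega>)) -` {t} \<inter> space M)"
  let ?g = "\<lambda>t. log b (?Pyz t / (?Py (fst t) * ?Pz (snd t)))"
  have "MI M b Y Z = (\<Sum>t\<in>(\<lambda>\<omega>. (Y \<omega>, Z \<omega>)) ` space M. ?Pyz t * ?g t)"
    unfolding MI_def
    by (subst mutual_information_simple_distributed[OF simple_distributedI[OF Y measure_nonneg refl]
          simple_distributedI[OF Z measure_nonneg refl] simple_distributedI[OF YZ measure_nonneg refl]])
       (simp add: split_beta')
  also have "\<dots> = expectation (\<lambda>\<omega>. ?g (Y \<omega>, Z \<omega>))"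
    using expectation_eq_sum_simple[OF YZ, of ?g] by simp
  also have "\<dots> = expectation (\<lambda>\<omega>. surprisal Y \<omega> + surprisal Z \<omega> - surprisal (\<lambda>\<omega>. (Y \<omega>, Z \<omega>)) \<omega>)"
  proof (rule integral_cong_AE)
    show "(\<lambda>\<omega>. ?g (Y \<omega>, Z \<omega>)) \<in> borel_measurable M"
      using simple_function_compose[OF YZ, of ?g] by (simp add: o_def borel_measurable_simple_function)
    show "(\<lambda>\<omega>. surprisal Y \<omega> + surprisal Z \<omega> - surprisal (\<lambda>\<omega>. (Y \<omega>, Z \<omega>)) \<omega>) \<in> borel_measurable M"
      using Y Z YZ by (intro borel_measurable_add borel_measurable_diff
          borel_measurable_simple_function simple_function_surprisal)
    show "AE \<omega> in M. ?g (Y \<omega>, Z \<omega>) = surprisal Y \<omega> + surprisal Z \<omega> - surprisal (\<lambda>\<omega>. (Y \<omega>, Z \<omega>)) \<omega>"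
      using AE_prob_fiber_pos[OF Y] AE_prob_fiber_pos[OF Z] AE_prob_fiber_pos[OF YZ] AE_space
      by eventually_elim (simp add: surprisal_def vimage_singleton_Int_space log_divide log_mult)
  qed
  also have "\<dots> = Ent M b Y + Ent M b Z - Ent M b (\<lambda>\<omega>. (Y \<omega>, Z \<omega>))"
    using integrable_surprisal[OF Y] integrable_surprisal[OF Z] integrable_surprisal[OF YZ]
    by (simp add: Ent_eq_expectation_surprisal Y Z YZ)
  finally show ?thesis .
qed

lemma CMI_eq_Ent:
  assumes A: "simple_function M A" and B: "simple_function M B" and C: "simple_function M C"
  shows "CMI M b A B C = Ent M b (\<lambda>\<omega>. (A \<omega>, C \<omega>)) + Ent M b (\<lambda>\<omega>. (B \<omega>, C \<omega>))
      - Ent M b (\<lambda>\<omega>. (A \<omega>, B \<omega>, C \<omega>)) - Ent M b C"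
proof -
  note AC = simple_function_Pair[OF A C] and BC = simple_function_Pair[OF B C]
  note ABC = simple_function_Pair[OF A BC]
  let ?Pc = "\<lambda>z. prob (C -` {z} \<inter> space M)"
  let ?Pbc = "\<lambda>t. prob ((\<lambda>\<omega>. (B \<omega>, C \<omega>)) -` {t} \<inter> space M)"
  let ?Pac = "\<lambda>t. prob ((\<lambda>\<omega>. (A \<omega>, C \<omega>)) -` {t} \<inter> space M)"
  let ?Pabc = "\<lambda>t. prob ((\<lambda>\<omega>. (A \<omega>, B \<omega>, C \<omega>)) -` {t} \<inter> space M)"
  let ?g = "\<lambda>t. log b (?Pabc t / (?Pac (fst t, snd (snd t)) * (?Pbc (snd t) / ?Pc (snd (snd t)))))"
  let ?s = "\<lambda>\<omega>. surprisal (\<lambda>\<omega>. (A \<omega>, C \<omega>)) \<omega> + surprisal (\<lambda>\<omega>. (B \<omega>, C \<omega>)) \<omega>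
      - surprisal (\<lambda>\<omega>. (A \<omega>, B \<omega>, C \<omega>)) \<omega> - surprisal C \<omega>"
  have "CMI M b A B C = (\<Sum>t\<in>(\<lambda>\<omega>. (A \<omega>, B \<omega>, C \<omega>)) ` space M. ?Pabc t * ?g t)"
    unfolding CMI_def
    by (subst conditional_mutual_information_eq[OF simple_distributedI[OF C measure_nonneg refl]
          simple_distributedI[OF BC measure_nonneg refl] simple_distributedI[OF AC measure_nonneg refl]
          simple_distributedI[OF ABC measure_nonneg refl]])
       (simp add: split_beta')
  also have "\<dots> = expectation (\<lambda>\<omega>. ?g (A \<omega>, B \<omega>, C \<omega>))"
    using expectation_eq_sum_simple[OF ABC, of ?g] by simp
  also have "\<dots> = expectation ?s"
  proof (rule integral_cong_AE)
    show "(\<lambda>\<omega>. ?g (A \<omega>, B \<omega>, C \<omega>)) \<in> borel_measurable M"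
      using simple_function_compose[OF ABC, of ?g] by (simp add: o_def borel_measurable_simple_function)
    show "?s \<in> borel_measurable M"
      using AC BC ABC C by (intro borel_measurable_add borel_measurable_diff
          borel_measurable_simple_function simple_function_surprisal)
    show "AE \<omega> in M. ?g (A \<omega>, B \<omega>, C \<omega>) = ?s \<omega>"
      using AE_prob_fiber_pos[OF AC] AE_prob_fiber_pos[OF BC] AE_prob_fiber_pos[OF ABC]
        AE_prob_fiber_pos[OF C] AE_space
      by eventually_elim (simp add: surprisal_def vimage_singleton_Int_space log_divide log_mult)
  qed
  also have "\<dots> = Ent M b (\<lambda>\<omega>. (A \<omega>, C \<omega>)) + Ent M b (\<lambda>\<omega>. (B \<omega>, C \<omega>))
      - Ent M b (\<lambda>\<omega>. (A \<omega>, B \<omega>, C \<omega>)) - Ent M b C"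
    using integrable_surprisal[OF AC] integrable_surprisal[OF BC] integrable_surprisal[OF ABC]
      integrable_surprisal[OF C]
    by (simp add: Ent_eq_expectation_surprisal AC BC ABC C)
  finally show ?thesis .
qed

lemma CMI_eq_0_if_cond_indep:
  assumes A: "simple_function M A" and B: "simple_function M B" and C: "simple_function M C"
    and indep: "cond_indep M A B C"
  shows "CMI M b A B C = 0"
proof -
  note AC = simple_function_Pair[OF A C] and BC = simple_function_Pair[OF B C]
  note ABC = simple_function_Pair[OF A BC]
  have "AE \<omega> in M. surprisal (\<lambda>\<omega>. (A \<omega>, C \<omega>)) \<omega> + surprisal (\<lambda>\<omega>. (B \<omega>, C \<omega>)) \<omega>
      = surprisal (\<lambda>\<omega>. (A \<omega>, B \<omega>, C \<omega>)) \<omega> + surprisal C \<omega>"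
    using AE_prob_fiber_pos[OF AC] AE_prob_fiber_pos[OF BC] AE_prob_fiber_pos[OF ABC]
      AE_prob_fiber_pos[OF C]
  proof eventually_elim
    case (elim \<omega>)
    have "prob {w \<in> space M. A w = A \<omega> \<and> B w = B \<omega> \<and> C w = C \<omega>} * prob {w \<in> space M. C w = C \<omega>}
        = prob {w \<in> space M. A w = A \<omega> \<and> C w = C \<omega>} * prob {w \<in> space M. B w = B \<omega> \<and> C w = C \<omega>}"
      using indep unfolding cond_indep_def by blast
    then have "log b (prob {w \<in> space M. A w = A \<omega> \<and> B w = B \<omega> \<and> C w = C \<omega>})
        + log b (prob {w \<in> space M. C w = C \<omega>})
        = log b (prob {w \<in> space M. A w = A \<omega> \<and> C w = C \<omega>})
        + log b (prob {w \<in> space M. B w = B \<omega> \<and> C w = C \<omega>})"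
      using elim by (simp flip: log_mult_pos)
    then show ?case
      unfolding surprisal_def by simp
  qed
  then have "expectation (\<lambda>\<omega>. surprisal (\<lambda>\<omega>. (A \<omega>, C \<omega>)) \<omega> + surprisal (\<lambda>\<omega>. (B \<omega>, C \<omega>)) \<omega>)
      = expectation (\<lambda>\<omega>. surprisal (\<lambda>\<omega>. (A \<omega>, B \<omega>, C \<omega>)) \<omega> + surprisal C \<omega>)"
    using AC BC ABC C by (intro integral_cong_AE borel_measurable_add
        borel_measurable_simple_function simple_function_surprisal)
  then show ?thesis
    using integrable_surprisal[OF AC] integrable_surprisal[OF BC] integrable_surprisal[OF ABC]
      integrable_surprisal[OF C]
    by (simp add: CMI_eq_Ent A B C Ent_eq_expectation_surprisal AC BC ABC)
qed

lemma CMI_nonneg: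
  "simple_function M A \<Longrightarrow> simple_function M B \<Longrightarrow> simple_function M C \<Longrightarrow> 0 \<le> CMI M b A B C"
  unfolding CMI_def by (rule conditional_mutual_information_nonneg)

lemma CMI_commute:
  assumes "simple_function M A" "simple_function M B" "simple_function M C"
  shows "CMI M b A B C = CMI M b B A C"
proof -
  have "Ent M b (\<lambda>\<omega>. (A \<omega>, B \<omega>, C \<omega>)) = Ent M b (\<lambda>\<omega>. (B \<omega>, A \<omega>, C \<omega>))"
    by (intro Ent_cong) (use assms in \<open>auto simp: determines_def\<close>)
  then show ?thesis
    using assms by (simp add: CMI_eq_Ent)
qed

lemma CMI_le_CMI_if_determines:
  assumes A: "simple_function M A" and A': "simple_function M A'"
    and B: "simple_function M B" and C: "simple_function M C" and det: "determines M A A'"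
  shows "CMI M b A' B C \<le> CMI M b A B C"
proof -
  have "0 \<le> CMI M b A B (\<lambda>\<omega>. (C \<omega>, A' \<omega>))"
    using A A' B C by (intro CMI_nonneg) auto
  moreover have "Ent M b (\<lambda>\<omega>. (A \<omega>, C \<omega>, A' \<omega>)) = Ent M b (\<lambda>\<omega>. (A \<omega>, C \<omega>))"
    by (intro Ent_cong) (use A A' C in \<open>auto simp: determines_def intro: determinesD[OF det]\<close>)
  moreover have "Ent M b (\<lambda>\<omega>. (A \<omega>, B \<omega>, C \<omega>, A' \<omega>)) = Ent M b (\<lambda>\<omega>. (A \<omega>, B \<omega>, C \<omega>))"
    by (intro Ent_cong) (use A A' B C in \<open>auto simp: determines_def intro: determinesD[OF det]\<close>)
  moreover have "Ent M b (\<lambda>\<omega>. (B \<omega>, C \<omega>, A' \<omega>)) = Ent M b (\<lambda>\<omega>. (A' \<omega>, B \<omega>, C \<omega>))"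
    by (intro Ent_cong) (use A' B C in \<open>auto simp: determines_def\<close>)
  moreover have "Ent M b (\<lambda>\<omega>. (C \<omega>, A' \<omega>)) = Ent M b (\<lambda>\<omega>. (A' \<omega>, C \<omega>))"
    by (intro Ent_cong) (use A' C in \<open>auto simp: determines_def\<close>)
  ultimately show ?thesis
    using A A' B C by (simp add: CMI_eq_Ent)
qed

lemma CMI_eq_0_if_determines:
  assumes A: "simple_function M A" and A': "simple_function M A'"
    and B: "simple_function M B" and B': "simple_function M B'" and C: "simple_function M C"
    and "determines M A A'" "determines M B B'" and "CMI M b A B C = 0"
  shows "CMI M b A' B' C = 0"
proof -
  have "CMI M b A' B' C \<le> CMI M b B A' C"
    using CMI_le_CMI_if_determines[OF B B' A' C] assms(7) CMI_commute[OF A' B' C] by simp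
  also have "\<dots> \<le> CMI M b A B C"
    using CMI_le_CMI_if_determines[OF A A' B C] assms(6) CMI_commute[OF B A' C] by simp
  finally show ?thesis
    using CMI_nonneg[OF A' B' C] assms(8) by simp
qed

lemma MI_le_MI_if_determines:
  assumes A: "simple_function M A" and B: "simple_function M B" and B': "simple_function M B'"
    and det: "determines M B B'"
  shows "MI M b A B' \<le> MI M b A B"
proof -
  have "0 \<le> CMI M b A B B'"
    using A B B' by (rule CMI_nonneg)
  moreover have "Ent M b (\<lambda>\<omega>. (B \<omega>, B' \<omega>)) = Ent M b B"
    by (intro Ent_cong) (use B B' in \<open>auto simp: determines_def intro: determinesD[OF det]\<close>)
  moreover have "Ent M b (\<lambda>\<omega>. (A \<omega>, B \<omega>, B' \<omega>)) = Ent M b (\<lambda>\<omega>. (A \<omega>, B \<omega>))"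
    by (intro Ent_cong) (use A B B' in \<open>auto simp: determines_def intro: determinesD[OF det]\<close>)
  ultimately show ?thesis
    using A B B' by (simp add: CMI_eq_Ent MI_eq_Ent)
qed

lemma CMI_add_MI_commute:
  assumes A: "simple_function M A" and B: "simple_function M B" and C: "simple_function M C"
  shows "CMI M b A B C + MI M b A C = CMI M b A C B + MI M b A B"
proof -
  have "Ent M b (\<lambda>\<omega>. (B \<omega>, C \<omega>)) = Ent M b (\<lambda>\<omega>. (C \<omega>, B \<omega>))"
    by (intro Ent_cong) (use B C in \<open>auto simp: determines_def\<close>)
  moreover have "Ent M b (\<lambda>\<omega>. (A \<omega>, B \<omega>, C \<omega>)) = Ent M b (\<lambda>\<omega>. (A \<omega>, C \<omega>, B \<omega>))"
    by (intro Ent_cong) (use A B C in \<open>auto simp: determines_def\<close>)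
  ultimately show ?thesis
    using A B C by (simp add: CMI_eq_Ent MI_eq_Ent)
qed

lemma CMI_cong_cond:
  assumes A: "simple_function M A" and B: "simple_function M B"
    and C: "simple_function M C" and C': "simple_function M C'"
    and det: "determines M C C'" and det': "determines M C' C"
  shows "CMI M b A B C = CMI M b A B C'"
proof -
  have "Ent M b (\<lambda>\<omega>. (A \<omega>, C \<omega>)) = Ent M b (\<lambda>\<omega>. (A \<omega>, C' \<omega>))"
    by (intro Ent_cong) (use A C C' in \<open>auto simp: determines_def intro: determinesD[OF det] determinesD[OF det']\<close>)
  moreover have "Ent M b (\<lambda>\<omega>. (B \<omega>, C \<omega>)) = Ent M b (\<lambda>\<omega>. (B \<omega>, C' \<omega>))"
    by (intro Ent_cong) (use B C C' in \<open>auto simp: determines_def intro: determinesD[OF det] determinesD[OF det']\<close>)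
  moreover have "Ent M b (\<lambda>\<omega>. (A \<omega>, B \<omega>, C \<omega>)) = Ent M b (\<lambda>\<omega>. (A \<omega>, B \<omega>, C' \<omega>))"
    by (intro Ent_cong) (use A B C C' in \<open>auto simp: determines_def intro: determinesD[OF det] determinesD[OF det']\<close>)
  moreover have "Ent M b C = Ent M b C'"
    by (intro Ent_cong) (use C C' in \<open>auto intro: det det'\<close>)
  ultimately show ?thesis
    using A B C C' by (simp add: CMI_eq_Ent)
qed

lemma CMI_drop_cond_if_CMI_eq_0:
  assumes A: "simple_function M A" and B: "simple_function M B" and C: "simple_function M C"
    and W: "simple_function M W" and D: "simple_function M D"
    and indep: "CMI M b (\<lambda>\<omega>. (A \<omega>, B \<omega>, C \<omega>)) W D = 0"
  shows "CMI M b A B (\<lambda>\<omega>. (C \<omega>, W \<omega>, D \<omega>)) = CMI M b A B (\<lambda>\<omega>. (C \<omega>, D \<omega>))"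
proof -
  note AC = simple_function_Pair[OF A C] and BC = simple_function_Pair[OF B C]
  note ABC = simple_function_Pair[OF A BC]
  have "CMI M b (\<lambda>\<omega>. (A \<omega>, C \<omega>)) W D = 0"
    by (rule CMI_eq_0_if_determines[OF ABC AC W W D _ _ indep]) (auto simp: determines_def)
  moreover have "CMI M b (\<lambda>\<omega>. (B \<omega>, C \<omega>)) W D = 0"
    by (rule CMI_eq_0_if_determines[OF ABC BC W W D _ _ indep]) (auto simp: determines_def)
  moreover have "CMI M b C W D = 0"
    by (rule CMI_eq_0_if_determines[OF ABC C W W D _ _ indep]) (auto simp: determines_def)
  moreover have "Ent M b (\<lambda>\<omega>. ((A \<omega>, C \<omega>), W \<omega>, D \<omega>)) = Ent M b (\<lambda>\<omega>. (A \<omega>, C \<omega>, W \<omega>, D \<omega>))"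
    by (intro Ent_cong) (use A C W D in \<open>auto simp: determines_def\<close>)
  moreover have "Ent M b (\<lambda>\<omega>. ((B \<omega>, C \<omega>), W \<omega>, D \<omega>)) = Ent M b (\<lambda>\<omega>. (B \<omega>, C \<omega>, W \<omega>, D \<omega>))"
    by (intro Ent_cong) (use B C W D in \<open>auto simp: determines_def\<close>)
  moreover have "Ent M b (\<lambda>\<omega>. ((A \<omega>, B \<omega>, C \<omega>), W \<omega>, D \<omega>)) = Ent M b (\<lambda>\<omega>. (A \<omega>, B \<omega>, C \<omega>, W \<omega>, D \<omega>))"
    by (intro Ent_cong) (use A B C W D in \<open>auto simp: determines_def\<close>)
  moreover have "Ent M b (\<lambda>\<omega>. ((A \<omega>, C \<omega>), D \<omega>)) = Ent M b (\<lambda>\<omega>. (A \<omega>, C \<omega>, D \<omega>))"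
    by (intro Ent_cong) (use A C D in \<open>auto simp: determines_def\<close>)
  moreover have "Ent M b (\<lambda>\<omega>. ((B \<omega>, C \<omega>), D \<omega>)) = Ent M b (\<lambda>\<omega>. (B \<omega>, C \<omega>, D \<omega>))"
    by (intro Ent_cong) (use B C D in \<open>auto simp: determines_def\<close>)
  moreover have "Ent M b (\<lambda>\<omega>. ((A \<omega>, B \<omega>, C \<omega>), D \<omega>)) = Ent M b (\<lambda>\<omega>. (A \<omega>, B \<omega>, C \<omega>, D \<omega>))"
    by (intro Ent_cong) (use A B C D in \<open>auto simp: determines_def\<close>)
  ultimately show ?thesis
    using CMI_eq_Ent[OF A B simple_function_Pair[OF C simple_function_Pair[OF W D]]]
      CMI_eq_Ent[OF A B simple_function_Pair[OF C D]] CMI_eq_Ent[OF AC W D] CMI_eq_Ent[OF BC W D]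
      CMI_eq_Ent[OF ABC W D] CMI_eq_Ent[OF C W D] indep
    by linarith
qed

lemma MI_commute:
  assumes "simple_function M A" "simple_function M B"
  shows "MI M b A B = MI M b B A"
proof -
  have "Ent M b (\<lambda>\<omega>. (A \<omega>, B \<omega>)) = Ent M b (\<lambda>\<omega>. (B \<omega>, A \<omega>))"
    by (intro Ent_cong) (use assms in \<open>auto simp: determines_def\<close>)
  then show ?thesis
    using assms by (simp add: MI_eq_Ent)
qed

lemma MI_le_Ent:
  assumes A: "simple_function M A" and B: "simple_function M B"
  shows "MI M b A B \<le> Ent M b A"
proof -
  have "Ent M b B \<le> Ent M b (\<lambda>\<omega>. (A \<omega>, B \<omega>))"
    using entropy_data_processing[OF simple_function_Pair[OF A B], of snd]
    by (simp add: Ent_def o_def)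
  then show ?thesis
    using A B by (simp add: MI_eq_Ent)
qed

lemma MI_Pair_add_MI:
  assumes A: "simple_function M A" and B: "simple_function M B" and C: "simple_function M C"
  shows "MI M b A (\<lambda>\<omega>. (B \<omega>, C \<omega>)) + MI M b C B = MI M b B A + MI M b (\<lambda>\<omega>. (A \<omega>, B \<omega>)) C"
proof -
  have "Ent M b (\<lambda>\<omega>. (C \<omega>, B \<omega>)) = Ent M b (\<lambda>\<omega>. (B \<omega>, C \<omega>))"
    by (intro Ent_cong) (use B C in \<open>auto simp: determines_def\<close>)
  moreover have "Ent M b (\<lambda>\<omega>. (B \<omega>, A \<omega>)) = Ent M b (\<lambda>\<omega>. (A \<omega>, B \<omega>))"
    by (intro Ent_cong) (use A B in \<open>auto simp: determines_def\<close>)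
  moreover have "Ent M b (\<lambda>\<omega>. ((A \<omega>, B \<omega>), C \<omega>)) = Ent M b (\<lambda>\<omega>. (A \<omega>, B \<omega>, C \<omega>))"
    by (intro Ent_cong) (use A B C in \<open>auto simp: determines_def\<close>)
  ultimately show ?thesis
    using A B C by (simp add: MI_eq_Ent)
qed

lemma Ent_comp_eq_if_distr_eq:
  assumes Z: "simple_function M Z" and Z': "simple_function M Z'"
    and distr_eq: "distr M (count_space UNIV) Z = distr M (count_space UNIV) Z'"
  shows "Ent M b (\<lambda>\<omega>. g (Z \<omega>)) = Ent M b (\<lambda>\<omega>. g (Z' \<omega>))"
proof -
  have Ent_distr: "Ent M b (\<lambda>\<omega>. g (Y \<omega>)) = (\<integral>z. - log b (measure (distr M (count_space UNIV) Y) (g -` {g z}))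
      \<partial>distr M (count_space UNIV) Y)" if Y: "simple_function M Y" for Y
  proof -
    have "Ent M b (\<lambda>\<omega>. g (Y \<omega>))
        = expectation (\<lambda>\<omega>. - log b (measure (distr M (count_space UNIV) Y) (g -` {g (Y \<omega>)})))"
      unfolding Ent_eq_expectation_surprisal[OF simple_function_compose[OF Y, unfolded o_def]]
      by (intro Bochner_Integration.integral_cong)
         (auto simp: surprisal_def measure_distr[OF measurable_simple_function[OF Y]]
               intro!: arg_cong[where f="\<lambda>A. log b (prob A)"])
    also have "\<dots> = (\<integral>z. - log b (measure (distr M (count_space UNIV) Y) (g -` {g z}))
        \<partial>distr M (count_space UNIV) Y)"
      by (rule integral_distr[symmetric, OF measurable_simple_function[OF Y]]) simp
    finally show ?thesis .
  qed
  show ?thesis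
    unfolding Ent_distr[OF Z] Ent_distr[OF Z'] distr_eq ..
qed

end

section \<open>Finite windows\<close>

lemma win_eq_iff: "win X a c \<omega> = win X a c \<omega>' \<longleftrightarrow> (\<forall>t. a \<le> t \<and> t \<le> c \<longrightarrow> X t \<omega> = X t \<omega>')"
  unfolding win_def by auto

lemma win_eq_split:
  assumes "a \<le> m + 1" "m \<le> c"
  shows "win X a c \<omega> = win X a c \<omega>' \<longleftrightarrow>
    win X a m \<omega> = win X a m \<omega>' \<and> win X (m + 1) c \<omega> = win X (m + 1) c \<omega>'"
proof
  assume "win X a c \<omega> = win X a c \<omega>'"
  then show "win X a m \<omega> = win X a m \<omega>' \<and> win X (m + 1) c \<omega> = win X (m + 1) c \<omega>'"
    using assms by (auto simp: win_eq_iff)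
next
  assume "win X a m \<omega> = win X a m \<omega>' \<and> win X (m + 1) c \<omega> = win X (m + 1) c \<omega>'"
  then have "X t \<omega> = X t \<omega>'" if "a \<le> t" "t \<le> c" for t
    using that by (cases "t \<le> m") (auto simp: win_eq_iff)
  then show "win X a c \<omega> = win X a c \<omega>'"
    by (simp add: win_eq_iff)
qed

lemma last_win: "a \<le> c \<Longrightarrow> last (win X a c \<omega>) = X c \<omega>"
  by (simp add: win_def upto_rec2)

lemma map_upto_shift: "map (\<lambda>t. f (t + s)) [a..c] = map f [a + s..c + (s::int)]"
  by (rule nth_equalityI) (auto simp: algebra_simps)

lemma simple_function_map:
  assumes "\<And>t. simple_function M (Y t)"
  shows "simple_function M (\<lambda>\<omega>. map (\<lambda>t. Y t \<omega>) ts)"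
proof (induction ts)
  case (Cons t ts)
  have "simple_function M ((\<lambda>(y, ys). y # ys) \<circ> (\<lambda>\<omega>. (Y t \<omega>, map (\<lambda>t. Y t \<omega>) ts)))"
    using assms Cons by (intro simple_function_compose simple_function_Pair)
  then show ?case by (simp add: o_def)
qed simp

section \<open>Stationary generators\<close>

locale stationary_generator = information_space +
  fixes X :: "int \<Rightarrow> 'a \<Rightarrow> 'x::finite" and R :: "int \<Rightarrow> 'a \<Rightarrow> 'r::finite"
  assumes measurable_X: "\<And>t. X t \<in> measurable M (count_space UNIV)"
    and measurable_R: "\<And>t. R t \<in> measurable M (count_space UNIV)"
    and stationary: "jointly_stationary M X R"
    and generator: "generator M X R"
begin

lemma simple_function_X [simp]: "simple_function M (X t)"
  and simple_function_R [simp]: "simple_function M (R t)"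
  using measurable_X measurable_R by (simp_all add: simple_function_eq_measurable)

lemma simple_function_win_X [simp]: "simple_function M (win X a c)"
  and simple_function_win_R [simp]: "simple_function M (win R a c)"
  using simple_function_map[of M X] simple_function_map[of M R] by (simp_all add: win_def[abs_def])

lemma Ent_win_shift:
  "Ent M b (\<lambda>\<omega>. g (win X (a + s) (c + s) \<omega>) (win R (a + s) (c + s) \<omega>))
    = Ent M b (\<lambda>\<omega>. g (win X a c \<omega>) (win R a c \<omega>))"
proof -
  let ?Z = "\<lambda>\<omega>. map (\<lambda>t. (X t \<omega>, R t \<omega>)) [a..c]"
  let ?Z' = "\<lambda>\<omega>. map (\<lambda>t. (X (t + s) \<omega>, R (t + s) \<omega>)) [a..c]"
  let ?h = "\<lambda>z. g (map fst z) (map snd z)"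
  have "?Z' \<omega> = map (\<lambda>t. (X t \<omega>, R t \<omega>)) [a + s..c + s]" for \<omega>
    using map_upto_shift[of "\<lambda>t. (X t \<omega>, R t \<omega>)"] by simp
  then have "Ent M b (\<lambda>\<omega>. g (win X (a + s) (c + s) \<omega>) (win R (a + s) (c + s) \<omega>)) = Ent M b (\<lambda>\<omega>. ?h (?Z' \<omega>))"
    by (simp add: win_def comp_def)
  also have "\<dots> = Ent M b (\<lambda>\<omega>. ?h (?Z \<omega>))"
    using stationary unfolding jointly_stationary_def
    by (intro Ent_comp_eq_if_distr_eq simple_function_map) auto
  also have "\<dots> = Ent M b (\<lambda>\<omega>. g (win X a c \<omega>) (win R a c \<omega>))"
    by (simp add: win_def comp_def)
  finally show ?thesis .
qed

lemma CMI_eq_0_if_generator: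
  assumes A: "simple_function M A" and B: "simple_function M B"
    and past: "determines M (\<lambda>\<omega>. (win X (t - int n) t \<omega>, win R (t - int n) (t - 1) \<omega>)) A"
    and future: "determines M (\<lambda>\<omega>. (win X (t + 1) (t + int m) \<omega>, win R (t + 1) (t + int m) \<omega>)) B"
  shows "CMI M b A B (R t) = 0"
proof (rule CMI_eq_0_if_determines[OF _ A _ B _ past future])
  show "CMI M b (\<lambda>\<omega>. (win X (t - int n) t \<omega>, win R (t - int n) (t - 1) \<omega>))
      (\<lambda>\<omega>. (win X (t + 1) (t + int m) \<omega>, win R (t + 1) (t + int m) \<omega>)) (R t) = 0"
    using generator unfolding generator_def by (intro CMI_eq_0_if_cond_indep) auto
qed auto

lemma Ent_R_shift: "Ent M b (R (t + s)) = Ent M b (R t)"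
  using Ent_win_shift[of "\<lambda>xs rs. last rs" t s t] by (simp add: last_win)

lemma CMI_past_R0_future_eq:
  assumes "1 \<le> k" "k \<le> m"
  shows "CMI M b (win X (1 - int n) 0) (R 0) (\<lambda>\<omega>. (win X 1 (int m) \<omega>, R (int k) \<omega>))
    = CMI M b (win X (1 - int n) 0) (R 0) (\<lambda>\<omega>. (win X 1 (int k) \<omega>, R (int k) \<omega>))"
proof -
  let ?P = "win X (1 - int n) 0" and ?Xk = "win X 1 (int k)" and ?W = "win X (int k + 1) (int m)"
  have split: "win X 1 (int m) \<omega> = win X 1 (int m) \<omega>' \<longleftrightarrow> ?Xk \<omega> = ?Xk \<omega>' \<and> ?W \<omega> = ?W \<omega>'"
    for \<omega> \<omega>'
    using win_eq_split[of 1 "int k" "int m"] assms by simp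
  have "CMI M b ?P (R 0) (\<lambda>\<omega>. (win X 1 (int m) \<omega>, R (int k) \<omega>))
      = CMI M b ?P (R 0) (\<lambda>\<omega>. (?Xk \<omega>, ?W \<omega>, R (int k) \<omega>))"
    by (intro CMI_cong_cond) (auto simp: determines_def split)
  also have "\<dots> = CMI M b ?P (R 0) (\<lambda>\<omega>. (?Xk \<omega>, R (int k) \<omega>))"
  proof (rule CMI_drop_cond_if_CMI_eq_0)
    show "CMI M b (\<lambda>\<omega>. (?P \<omega>, R 0 \<omega>, ?Xk \<omega>)) ?W (R (int k)) = 0"
      by (rule CMI_eq_0_if_generator[where n = "n + k" and m = "m - k"])
         (use assms in \<open>auto simp: determines_def win_eq_iff\<close>)
  qed auto
  finally show ?thesis .
qed

lemma CMI_past_future_R0_eq_0: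
  assumes "1 \<le> k"
  shows "CMI M b (win X (1 - int n) 0) (\<lambda>\<omega>. (win X 1 (int k) \<omega>, R (int k) \<omega>)) (R 0) = 0"
  by (rule CMI_eq_0_if_generator[where n = n and m = k]) (use assms in \<open>auto simp: determines_def win_eq_iff\<close>)

lemma CMI_future_R0_past_eq:
  assumes "1 \<le> k"
  shows "CMI M b (win X 1 (int k)) (R 0) (win X (1 - int n) 0)
    = MI M b (win X 1 (int k)) (R 0) - MI M b (win X 1 (int k)) (win X (1 - int n) 0)"
proof -
  have "CMI M b (win X (1 - int n) 0) (win X 1 (int k)) (R 0) = 0"
    by (rule CMI_eq_0_if_determines[OF _ _ _ _ _ _ _ CMI_past_future_R0_eq_0[OF assms]])
       (auto simp: determines_def)
  then show ?thesis
    using CMI_add_MI_commute[of "win X 1 (int k)" "R 0" "win X (1 - int n) 0"]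
      CMI_commute[of "win X (1 - int n) 0" "win X 1 (int k)" "R 0"] by simp
qed

lemma MI_R0_past_shift:
  assumes "1 \<le> k"
  shows "MI M b (R 0) (win X (1 - int (n + k)) 0)
    = MI M b (R (int k)) (\<lambda>\<omega>. (win X (1 - int n) 0 \<omega>, win X 1 (int k) \<omega>))"
proof -
  let ?P = "win X (1 - int n) 0" and ?Xk = "win X 1 (int k)" and ?Y = "win X (1 - int n) (int k)"
  have split: "?Y \<omega> = ?Y \<omega>' \<longleftrightarrow> ?P \<omega> = ?P \<omega>' \<and> ?Xk \<omega> = ?Xk \<omega>'" for \<omega> \<omega>'
    using win_eq_split[of "1 - int n" 0 "int k"] by simp
  have "Ent M b (win X (1 - int (n + k)) 0) = Ent M b ?Y"
    using Ent_win_shift[of "\<lambda>xs rs. xs" "1 - int (n + k)" "int k" 0] by simp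
  also have "\<dots> = Ent M b (\<lambda>\<omega>. (?P \<omega>, ?Xk \<omega>))"
    by (intro Ent_cong) (auto simp: determines_def split)
  finally have P: "Ent M b (win X (1 - int (n + k)) 0) = Ent M b (\<lambda>\<omega>. (?P \<omega>, ?Xk \<omega>))" .
  have "Ent M b (\<lambda>\<omega>. (R 0 \<omega>, win X (1 - int (n + k)) 0 \<omega>)) = Ent M b (\<lambda>\<omega>. (R (int k) \<omega>, ?Y \<omega>))"
    using Ent_win_shift[of "\<lambda>xs rs. (last rs, xs)" "1 - int (n + k)" "int k" 0] assms
    by (simp add: last_win)
  also have "\<dots> = Ent M b (\<lambda>\<omega>. (R (int k) \<omega>, ?P \<omega>, ?Xk \<omega>))"
    by (intro Ent_cong) (auto simp: determines_def split)
  finally have RP: "Ent M b (\<lambda>\<omega>. (R 0 \<omega>, win X (1 - int (n + k)) 0 \<omega>))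
      = Ent M b (\<lambda>\<omega>. (R (int k) \<omega>, ?P \<omega>, ?Xk \<omega>))" .
  show ?thesis
    using P RP Ent_R_shift[of 0 "int k"] by (simp add: MI_eq_Ent)
qed

lemma CMI_past_R0_given_future_eq:
  assumes "1 \<le> k" "k \<le> m"
  shows "CMI M b (win X (1 - int n) 0) (R 0) (\<lambda>\<omega>. (win X 1 (int m) \<omega>, R (int k) \<omega>))
    = CMI M b (win X 1 (int k)) (R 0) (win X (1 - int n) 0)
      - (MI M b (R 0) (win X 1 (int k)) - MI M b (R (int k)) (win X 1 (int k)))
      + MI M b (R 0) (win X (1 - int n) 0) - MI M b (R 0) (win X (1 - int (n + k)) 0)"
proof -
  let ?P = "win X (1 - int n) 0" and ?Xk = "win X 1 (int k)"
  have "CMI M b ?P (R 0) (\<lambda>\<omega>. (?Xk \<omega>, R (int k) \<omega>))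
      = MI M b ?P (R 0) - MI M b ?P (\<lambda>\<omega>. (?Xk \<omega>, R (int k) \<omega>))"
    using CMI_add_MI_commute[of ?P "R 0" "\<lambda>\<omega>. (?Xk \<omega>, R (int k) \<omega>)"]
      CMI_past_future_R0_eq_0[OF assms(1)] by simp
  moreover have "MI M b ?P (\<lambda>\<omega>. (?Xk \<omega>, R (int k) \<omega>)) + MI M b (R (int k)) ?Xk
      = MI M b ?Xk ?P + MI M b (\<lambda>\<omega>. (?P \<omega>, ?Xk \<omega>)) (R (int k))"
    by (rule MI_Pair_add_MI) auto
  ultimately show ?thesis
    using CMI_past_R0_future_eq[OF assms, of n] CMI_future_R0_past_eq[OF assms(1), of n]
      MI_R0_past_shift[OF assms(1), of n] MI_commute[of ?P "R 0"] MI_commute[of ?Xk "R 0"] MI_commute[of ?Xk ?P]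
      MI_commute[of "\<lambda>\<omega>. (?P \<omega>, ?Xk \<omega>)" "R (int k)"]
    by simp
qed

lemma past_determines_shorter_past: "determines M (win X (- int n) 0) (win X (1 - int n) 0)"
  by (auto simp: determines_def win_eq_iff)

lemma zeta_limit:
  assumes "1 \<le> k"
  shows "(\<lambda>n. CMI M b (win X 1 (int k)) (R 0) (win X (1 - int n) 0)) \<longlonglongrightarrow> zeta M b X R k"
proof -
  let ?z = "\<lambda>n. CMI M b (win X 1 (int k)) (R 0) (win X (1 - int n) 0)"
  have "decseq ?z"
  proof (rule decseq_SucI)
    fix n
    show "?z (Suc n) \<le> ?z n"
      using MI_le_MI_if_determines[OF _ _ _ past_determines_shorter_past, of "win X 1 (int k)" n]
        CMI_future_R0_past_eq[OF assms, of n] CMI_future_R0_past_eq[OF assms, of "Suc n"] by simp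
  qed
  moreover have "\<forall>n. 0 \<le> ?z n"
    by (simp add: CMI_nonneg)
  ultimately have "convergent ?z"
    by (auto elim: decseq_convergent intro: convergentI)
  then show ?thesis
    by (simp add: zeta_def convergent_LIMSEQ_iff)
qed

lemma convergent_MI_R0_past: "convergent (\<lambda>n. MI M b (R 0) (win X (1 - int n) 0))"
proof -
  have "incseq (\<lambda>n. MI M b (R 0) (win X (1 - int n) 0))"
    using MI_le_MI_if_determines[OF _ _ _ past_determines_shorter_past, of "R 0"]
    by (intro incseq_SucI) simp
  moreover have "\<forall>n. MI M b (R 0) (win X (1 - int n) 0) \<le> Ent M b (R 0)"
    by (simp add: MI_le_Ent)
  ultimately show ?thesis
    by (auto elim: incseq_convergent intro: convergentI)
qed

lemma Ent_diff_eq_MI_diff: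
  "Ent M b (\<lambda>\<omega>. (R (int k) \<omega>, win X 1 (int k) \<omega>)) - Ent M b (\<lambda>\<omega>. (R 0 \<omega>, win X 1 (int k) \<omega>))
    = MI M b (R 0) (win X 1 (int k)) - MI M b (R (int k)) (win X 1 (int k))"
  using Ent_R_shift[of 0 "int k"] by (simp add: MI_eq_Ent)

theorem MI_diff_eq_zeta_minus_past_R0_given_future_Rk:
  assumes "1 \<le> k"
  shows "MI M b (R 0) (win X 1 (int k)) - MI M b (R (int k)) (win X 1 (int k))
    = zeta M b X R k - past_R0_given_future_Rk M b X R k"
proof -
  define T where "T = MI M b (R 0) (win X 1 (int k)) - MI M b (R (int k)) (win X 1 (int k))"
  define z where "z = (\<lambda>n. CMI M b (win X 1 (int k)) (R 0) (win X (1 - int n) 0))"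
  define e where "e = (\<lambda>n. MI M b (R 0) (win X (1 - int n) 0))"
  define Q where "Q = (\<lambda>(n::nat, m::nat). CMI M b (win X (1 - int n) 0) (R 0)
    (\<lambda>\<omega>. (win X 1 (int m) \<omega>, R (int k) \<omega>)))"
  obtain L where e: "e \<longlonglongrightarrow> L"
    using convergent_MI_R0_past unfolding e_def convergent_def by blast
  have "(\<lambda>n. z n - T + e n - e (n + k)) \<longlonglongrightarrow> zeta M b X R k - T + L - L"
    by (intro tendsto_intros zeta_limit[OF assms, folded z_def] e LIMSEQ_ignore_initial_segment)
  then have "((\<lambda>p. z (fst p) - T + e (fst p) - e (fst p + k)) \<longlongrightarrow> zeta M b X R k - T)
      (sequentially \<times>\<^sub>F sequentially)"
    using filterlim_compose[OF _ filterlim_fst] by simp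
  moreover have "\<forall>\<^sub>F p in sequentially \<times>\<^sub>F sequentially. z (fst p) - T + e (fst p) - e (fst p + k) = Q p"
    unfolding eventually_prod_sequentially
    by (auto intro!: exI[of _ k] simp: Q_def T_def z_def e_def CMI_past_R0_given_future_eq[OF assms])
  ultimately have "(Q \<longlongrightarrow> zeta M b X R k - T) (sequentially \<times>\<^sub>F sequentially)"
    by (rule Lim_transform_eventually)
  then have "past_R0_given_future_Rk M b X R k = zeta M b X R k - T"
    unfolding past_R0_given_future_Rk_def Q_def
    by (intro tendsto_Lim) (simp_all add: prod_filter_eq_bot)
  then show ?thesis
    by (simp add: T_def)
qed

end

theorem mainTheorem11:
  fixes M :: "'w measure" and b :: real
    and X :: "int \<Rightarrow> 'w \<Rightarrow> 'x::finite" and R :: "int \<Rightarrow> 'w \<Rightarrow> 'r::finite"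
    and k :: nat
  assumes "information_space M b"
    and "\<And>t. X t \<in> measurable M (count_space UNIV)"
    and "\<And>t. R t \<in> measurable M (count_space UNIV)"
    and "jointly_stationary M X R"
    and "generator M X R"
    and "k \<ge> 1"
  shows "Ent M b (\<lambda>\<omega>. (R (int k) \<omega>, win X 1 (int k) \<omega>)) - Ent M b (\<lambda>\<omega>. (R 0 \<omega>, win X 1 (int k) \<omega>))
           = MI M b (R 0) (win X 1 (int k)) - MI M b (R (int k)) (win X 1 (int k))
       \<and> MI M b (R 0) (win X 1 (int k)) - MI M b (R (int k)) (win X 1 (int k))
           = zeta M b X R k - past_R0_given_future_Rk M b X R k"
proof -
  interpret stationary_generator M b X R
    unfolding stationary_generator_def stationary_generator_axioms_def using assms by blast
  show ?thesis
    using Ent_diff_eq_MI_diff MI_diff_eq_zeta_minus_past_R0_given_future_Rk[OF assms(6)] by simp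
qed

end
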